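(* Let $\epsilon\in(0,1)$ and $\mu\ge1$. Let $R^*\in\arg\min_{R\in\mathcal{O}_{p\times k}}\max_{e\in\mathcal{E}}\mathbb{E}_{\mathbf{x}\sim P_e}\|\mathbf{x}-\mathbf{x}RR^\top\|_2^2$ (the population worst-case completion problem with fully observed source domains, equivalently a maxRCS solution). Let $Q_{\mathrm{target}}$ be a distribution on masks $\omega\in\{0,1\}^p$ such that, for $\omega\sim Q_{\mathrm{target}}$, the number $s$ of zero entries of $\omega$ satisfies $s\le\frac{p\epsilon}{k\mu^2(2\epsilon+1)}$ almost surely. If $R^*$ is $\mu$-incoherent, then $$\sup_{P\in\mathcal{P}}\mathcal{L}_{P,Q_{\mathrm{target}}}(R^* )\le(1+\epsilon)\min_{R\in\mathcal{O}_{p\times k}}\sup_{P\in\mathcal{P}}\mathcal{L}_{P,Q_{\mathrm{target}}}(R).$$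
   Context: $\mathcal{O}_{p\times k}=\{V\in\mathbb{R}^{p\times k}:V^\top V=I_k\}$. Source domains $\mathcal{E}=\{1,\dots,E\}$; each $P_e$ is a distribution on $\mathbb{R}^{1\times p}$ with mean zero and finite covariance $\Sigma_e=\mathbb{E}[\mathbf{x}^\top\mathbf{x}]$, $\operatorname{Tr}(\Sigma_e)>0$. $\mathcal{P}$ is the set of distributions on $\mathbb{R}^{1\times p}$ with mean zero, finite second moments and $\mathbb{E}_P[\mathbf{x}^\top\mathbf{x}]\in\operatorname{conv}(\{\Sigma_e\}_{e\in\mathcal{E}})$. $R\in\mathcal{O}_{p\times k}$ is $\mu$-incoherent if every row $R^{(i)}$ satisfies $\|R^{(i)}\|_2\le\mu\sqrt{k/p}$. For $\mathbf{x}\in\mathbb{R}^{1\times p}$, a mask $\omega\in\{0,1\}^p$ ($\omega_i=1$ meaning coordinate $i$ is observed) and $R\in\mathcal{O}_{p\times k}$, $\ell_{\mathrm{OLS}}(\mathbf{x},\omega,R)$ denotes a minimizer over $\ell\in\mathbb{R}^{1\times k}$ of $\sum_{i\in[p]:\omega_i=1}(\mathbf{x}_i-[\ell R^\top]_i)^2$ (any measurable choice of minimizer). For distributions $P$ of $\mathbf{x}$ and $Q$ of $\omega$ (with $\omega$ independent of $\mathbf{x}$), $\mathcal{L}_{P,Q}(R):=\mathbb{E}_{\mathbf{x}\sim P,\omega\sim Q}\|\mathbf{x}-\ell_{\mathrm{OLS}}(\mathbf{x},\omega,R)R^\top\|_2^2$. *)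

theory Defs
  imports "HOL-Analysis.Analysis" "HOL-Probability.Probability"
begin

text \<open>Row vectors x in R^{1 x p} are modelled as real^'p; a p x k matrix R as
  real^'k^'p (rows indexed by 'p).  The row vector l R^T equals R *v l, and
  x R equals x v* R.  A mask is a function 'p => bool (True = observed).\<close>

definition orthonormal :: "real^'k^'p \<Rightarrow> bool" where
  "orthonormal R \<longleftrightarrow> transpose R ** R = mat 1"

definition incoherent :: "real \<Rightarrow> real^'k^'p \<Rightarrow> bool" where
  "incoherent \<mu> R \<longleftrightarrow>
     (\<forall>i. norm (R $ i) \<le> \<mu> * sqrt (real CARD('k) / real CARD('p)))"

definition centered_l2 :: "(real^'p) measure \<Rightarrow> bool" where
  "centered_l2 P \<longleftrightarrow> prob_space P \<and> sets P = sets borel \<and>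
     (\<forall>i. integrable P (\<lambda>x. x $ i) \<and> (\<integral>x. x $ i \<partial>P) = 0) \<and>
     integrable P (\<lambda>x. (norm x)\<^sup>2)"

definition cov :: "(real^'p) measure \<Rightarrow> real^'p^'p" where
  "cov P = (\<chi> i j. \<integral>x. x $ i * x $ j \<partial>P)"

definition mtrace :: "real^'p^'p \<Rightarrow> real" where
  "mtrace A = (\<Sum>i\<in>UNIV. A $ i $ i)"

definition Pset :: "nat \<Rightarrow> (nat \<Rightarrow> (real^'p) measure) \<Rightarrow> (real^'p) measure set" where
  "Pset E Pe = {P. centered_l2 P \<and> cov P \<in> convex hull ((\<lambda>e. cov (Pe e)) ` {1..E})}"

definition is_ols :: "real^'p \<Rightarrow> ('p \<Rightarrow> bool) \<Rightarrow> real^'k^'p \<Rightarrow> real^'k \<Rightarrow> bool" where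
  "is_ols x \<omega> R l \<longleftrightarrow>
     (\<forall>l'. (\<Sum>i\<in>{i. \<omega> i}. (x $ i - (R *v l) $ i)\<^sup>2)
          \<le> (\<Sum>i\<in>{i. \<omega> i}. (x $ i - (R *v l') $ i)\<^sup>2))"

text \<open>Completion loss L_{P,Q}(R) for a given choice function lsel of OLS minimizers;
  x ~ P and omega ~ Q independent (expectation taken as iterated nonnegative integral).\<close>
definition compl_loss ::
  "(real^'p \<Rightarrow> ('p \<Rightarrow> bool) \<Rightarrow> real^'k^'p \<Rightarrow> real^'k)
     \<Rightarrow> (real^'p) measure \<Rightarrow> ('p \<Rightarrow> bool) pmf \<Rightarrow> real^'k^'p \<Rightarrow> ennreal" where
  "compl_loss lsel P Q R =
     (\<integral>\<^sup>+ \<omega>. (\<integral>\<^sup>+ x. ennreal ((norm (x - R *v lsel x \<omega> R))\<^sup>2) \<partial>P) \<partial>measure_pmf Q)"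

definition worst_risk :: "nat \<Rightarrow> (nat \<Rightarrow> (real^'p) measure) \<Rightarrow> real^'k^'p \<Rightarrow> real" where
  "worst_risk E Pe R =
     Max ((\<lambda>e. \<integral>x. (norm (x - R *v (x v* R)))\<^sup>2 \<partial>(Pe e)) ` {1..E})"

end

(*
  Let R be orthonormal, let l be an OLS coefficient computed from the observed coordinates of x,
  and let d = l - x R be its deviation from the full projection coefficient. Pythagoras gives
  |x - l R^T|^2 = |x - x R R^T|^2 + |d|^2, and the normal equations together with Cauchy-Schwarz
  give (1 - delta)^2 |d|^2 <= delta |x - x R R^T|^2, where delta is the squared mass of the rows
  of R at the missing coordinates. For R* incoherence bounds delta by eps/(2 eps + 1), which makes
  delta/(1 - delta)^2 <= eps: imputing with R* costs at most a factor 1 + eps over projecting.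
  The projection risk is linear in the covariance, so its supremum over the uncertainty set is the
  worst source risk, which R* minimizes. Conversely, for any R imputation is never better than
  projection, so the worst source risk of R is a lower bound for its worst-case completion loss.
*)

theory Submission
  imports Defs
begin

lemma orthonormal_vector_matrix_mult_cancel:
  assumes "orthonormal (R :: real^'k^'p)"
  shows "(R *v v) v* R = v"
proof -
  have "(R *v v) v* R = transpose R *v (R *v v)"
    by simp
  also have "\<dots> = (transpose R ** R) *v v"
    by (simp only: matrix_vector_mul_assoc)
  finally show ?thesis
    using assms by (simp add: orthonormal_def)
qed

lemma orthonormal_inner_mult:
  assumes "orthonormal (R :: real^'k^'p)"
  shows "inner (R *v v) (R *v w) = inner v w"
  by (metis dot_lmul_matrix orthonormal_vector_matrix_mult_cancel[OF assms])

lemma orthonormal_projection_residual_orthogonal: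
  assumes "orthonormal (R :: real^'k^'p)"
  shows "inner (x - R *v (x v* R)) (R *v v) = 0"
  using assms
  by (simp add: dot_lmul_matrix[symmetric] vector_matrix_mult_diff_distrib
      orthonormal_vector_matrix_mult_cancel)

lemma orthonormal_residual_pythagoras:
  assumes "orthonormal (R :: real^'k^'p)"
  shows "(norm (x - R *v l))\<^sup>2 = (norm (x - R *v (x v* R)))\<^sup>2 + (norm (l - x v* R))\<^sup>2"
proof -
  let ?r = "x - R *v (x v* R)" and ?y = "R *v (l - x v* R)"
  have split: "x - R *v l = ?r - ?y"
    by (simp add: matrix_vector_mult_diff_distrib)
  have "inner ?r ?y = 0"
    by (rule orthonormal_projection_residual_orthogonal[OF assms])
  moreover have "inner ?y ?y = inner (l - x v* R) (l - x v* R)"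
    by (rule orthonormal_inner_mult[OF assms])
  ultimately show ?thesis
    unfolding split power2_norm_eq_inner
    by (simp add: inner_diff_left inner_diff_right inner_commute)
qed

lemma orthonormal_projection_residual_le:
  assumes "orthonormal (R :: real^'k^'p)"
  shows "(norm (x - R *v (x v* R)))\<^sup>2 \<le> (norm (x - R *v l))\<^sup>2"
  using orthonormal_residual_pythagoras[OF assms, of x l] by simp

lemma projection_residual_quadratic_form:
  assumes "orthonormal (R :: real^'k^'p)"
  shows "(norm (x - R *v (x v* R)))\<^sup>2 =
    (\<Sum>i\<in>UNIV. \<Sum>j\<in>UNIV. (mat 1 - R ** transpose R) $ i $ j * (x $ i * x $ j))"
proof -
  have "(norm (x - R *v (x v* R)))\<^sup>2 = inner x x - inner (x v* R) (x v* R)"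
    using orthonormal_residual_pythagoras[OF assms, of x 0] by (simp add: power2_norm_eq_inner)
  also have "\<dots> = inner x ((mat 1 - R ** transpose R) *v x)"
    by (simp add: dot_lmul_matrix matrix_vector_mult_diff_rdistrib inner_diff_right
        matrix_vector_mul_assoc[symmetric])
  also have "\<dots> = (\<Sum>i\<in>UNIV. \<Sum>j\<in>UNIV. (mat 1 - R ** transpose R) $ i $ j * (x $ i * x $ j))"
    by (simp add: inner_vec_def matrix_vector_mult_def sum_distrib_left mult_ac)
  finally show ?thesis .
qed

lemma sum_UNIV_mask_split:
  fixes f :: "'p::finite \<Rightarrow> 'a::comm_monoid_add"
  shows "(\<Sum>i\<in>UNIV. f i) = (\<Sum>i\<in>{i. \<omega> i}. f i) + (\<Sum>i\<in>{i. \<not> \<omega> i}. f i)"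
  using sum.Int_Diff[of UNIV f "{i. \<omega> i}"] by (simp add: Collect_neg_eq Compl_eq_Diff_UNIV)

lemma linear_coeff_eq_0_if_quadratic_nonneg:
  fixes b c :: real
  assumes nonneg: "\<And>t. 0 \<le> t\<^sup>2 * c - 2 * t * b"
  shows "b = 0"
proof -
  define s where "s = \<bar>c\<bar> + 1"
  have "s > 0" by (simp add: s_def)
  have "0 \<le> ((b / s)\<^sup>2 * c - 2 * (b / s) * b) * s\<^sup>2"
    using nonneg[of "b / s"] by simp
  also have "\<dots> = b\<^sup>2 * (c - 2 * s)"
    using \<open>s > 0\<close> by (simp add: field_simps power2_eq_square)
  finally have "0 \<le> b\<^sup>2 * (c - 2 * s)" .
  moreover have "c - 2 * s < 0"
    by (simp add: s_def)
  ultimately have "b\<^sup>2 \<le> 0"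
    by (simp add: zero_le_mult_iff)
  then show ?thesis by simp
qed

lemma is_ols_residual_orthogonal:
  assumes "is_ols x \<omega> R l"
  shows "(\<Sum>i\<in>{i. \<omega> i}. (x - R *v l) $ i * (R *v v) $ i) = 0"
proof (rule linear_coeff_eq_0_if_quadratic_nonneg)
  fix t :: real
  let ?O = "{i. \<omega> i}" and ?e = "x - R *v l" and ?y = "R *v v"
  have "(\<Sum>i\<in>?O. (?e $ i)\<^sup>2) \<le> (\<Sum>i\<in>?O. (x $ i - (R *v (l + t *\<^sub>R v)) $ i)\<^sup>2)"
    using assms unfolding is_ols_def by simp
  also have "\<dots> = (\<Sum>i\<in>?O. (?e $ i - t * ?y $ i)\<^sup>2)"
    by (simp add: matrix_vector_right_distrib matrix_vector_mult_scaleR algebra_simps)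
  also have "\<dots> = (\<Sum>i\<in>?O. (?e $ i)\<^sup>2 + (t\<^sup>2 * (?y $ i)\<^sup>2 - 2 * t * (?e $ i * ?y $ i)))"
    by (intro sum.cong refl) (simp add: power2_eq_square algebra_simps)
  finally show "0 \<le> t\<^sup>2 * (\<Sum>i\<in>?O. (?y $ i)\<^sup>2) - 2 * t * (\<Sum>i\<in>?O. ?e $ i * ?y $ i)"
    by (simp add: sum.distrib sum_subtractf sum_distrib_left)
qed

lemma sum_matrix_vector_mult_sq_le:
  fixes R :: "real^'k^'p"
  shows "(\<Sum>i\<in>M. ((R *v v) $ i)\<^sup>2) \<le> (\<Sum>i\<in>M. (norm (R $ i))\<^sup>2) * (norm v)\<^sup>2"
proof -
  have "(\<Sum>i\<in>M. ((R *v v) $ i)\<^sup>2) \<le> (\<Sum>i\<in>M. (norm (R $ i))\<^sup>2 * (norm v)\<^sup>2)"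
  proof (rule sum_mono)
    fix i
    have "((R *v v) $ i)\<^sup>2 = (inner (R $ i) v)\<^sup>2"
      by (simp add: matrix_vector_mult_def inner_vec_def)
    also have "\<dots> \<le> (norm (R $ i))\<^sup>2 * (norm v)\<^sup>2"
      by (metis Cauchy_Schwarz_ineq power2_norm_eq_inner)
    finally show "((R *v v) $ i)\<^sup>2 \<le> (norm (R $ i))\<^sup>2 * (norm v)\<^sup>2" .
  qed
  then show ?thesis
    by (simp add: sum_distrib_right)
qed

lemma sum_component_sq_le_norm_sq:
  fixes x :: "real^'n"
  shows "(\<Sum>i\<in>M. (x $ i)\<^sup>2) \<le> (norm x)\<^sup>2"
proof -
  have "(\<Sum>i\<in>M. (x $ i)\<^sup>2) \<le> (\<Sum>i\<in>UNIV. (x $ i)\<^sup>2)"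
    by (intro sum_mono2) auto
  then show ?thesis
    unfolding power2_norm_eq_inner by (simp add: inner_vec_def power2_eq_square)
qed

text \<open>Here y stands for the imputation error inside the column space and r for the projection
  residual. Orthogonality and the normal equations make the observed energy of y equal to minus
  the missing part of \<open>inner r y\<close>, which Cauchy-Schwarz bounds by the missing energy of y.\<close>

lemma masked_orthogonal_energy_le:
  fixes r y :: "real^'p"
  assumes "inner r y = 0" and normal: "(\<Sum>i\<in>{i. \<omega> i}. (r $ i - y $ i) * y $ i) = 0"
    and missing: "(\<Sum>i\<in>{i. \<not> \<omega> i}. (y $ i)\<^sup>2) \<le> \<delta> * (norm y)\<^sup>2"
    and "0 \<le> \<delta>" "\<delta> \<le> 1"
  shows "(1 - \<delta>)\<^sup>2 * (norm y)\<^sup>2 \<le> \<delta> * (norm r)\<^sup>2"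
proof -
  let ?O = "{i. \<omega> i}" and ?M = "{i. \<not> \<omega> i}"
  define n where "n = (norm y)\<^sup>2"
  have observed: "(\<Sum>i\<in>?O. (y $ i)\<^sup>2) = (\<Sum>i\<in>?O. r $ i * y $ i)"
    using normal by (simp add: power2_eq_square left_diff_distrib sum_subtractf)
  have cross: "(\<Sum>i\<in>?O. r $ i * y $ i) = - (\<Sum>i\<in>?M. r $ i * y $ i)"
    using \<open>inner r y = 0\<close> sum_UNIV_mask_split[of "\<lambda>i. r $ i * y $ i" \<omega>]
    by (simp add: inner_vec_def)
  have n_split: "n = (\<Sum>i\<in>?O. (y $ i)\<^sup>2) + (\<Sum>i\<in>?M. (y $ i)\<^sup>2)"
    using sum_UNIV_mask_split[of "\<lambda>i. (y $ i)\<^sup>2" \<omega>]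
    unfolding n_def power2_norm_eq_inner by (simp add: inner_vec_def power2_eq_square)
  have "(1 - \<delta>) * n = n - \<delta> * n"
    by (simp add: algebra_simps)
  then have "(1 - \<delta>) * n \<le> - (\<Sum>i\<in>?M. r $ i * y $ i)"
    using observed cross n_split missing[folded n_def] by linarith
  then have "(1 - \<delta>) * n \<le> \<bar>\<Sum>i\<in>?M. r $ i * y $ i\<bar>"
    by linarith
  moreover have "0 \<le> (1 - \<delta>) * n"
    using \<open>\<delta> \<le> 1\<close> by (simp add: n_def)
  ultimately have "((1 - \<delta>) * n)\<^sup>2 \<le> (\<Sum>i\<in>?M. r $ i * y $ i)\<^sup>2"
    by (metis power2_abs power_mono)
  also have "\<dots> \<le> (\<Sum>i\<in>?M. (r $ i)\<^sup>2) * (\<Sum>i\<in>?M. (y $ i)\<^sup>2)"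
    by (rule Cauchy_Schwarz_ineq_sum)
  also have "\<dots> \<le> (norm r)\<^sup>2 * (\<delta> * n)"
    using missing by (intro mult_mono sum_component_sq_le_norm_sq) (simp_all add: n_def sum_nonneg)
  finally have "((1 - \<delta>)\<^sup>2 * n) * n \<le> (\<delta> * (norm r)\<^sup>2) * n"
    by (simp add: power_mult_distrib power2_eq_square mult_ac)
  moreover have "n \<ge> 0"
    by (simp add: n_def)
  ultimately have "(1 - \<delta>)\<^sup>2 * n \<le> \<delta> * (norm r)\<^sup>2 \<or> n = 0"
    by (metis less_eq_real_def mult_right_le_imp_le)
  then show ?thesis
    using \<open>0 \<le> \<delta>\<close> by (auto simp: n_def)
qed

lemma ols_coefficient_error_le:
  fixes R :: "real^'k^'p"
  assumes orth: "orthonormal R" and ols: "is_ols x \<omega> R l"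
    and leverage: "(\<Sum>i\<in>{i. \<not> \<omega> i}. (norm (R $ i))\<^sup>2) \<le> \<delta>" and "\<delta> \<le> 1"
  shows "(1 - \<delta>)\<^sup>2 * (norm (l - x v* R))\<^sup>2 \<le> \<delta> * (norm (x - R *v (x v* R)))\<^sup>2"
proof -
  define r where "r = x - R *v (x v* R)"
  define d where "d = l - x v* R"
  have norm_Rd: "norm (R *v d) = norm d"
    by (simp add: norm_eq_sqrt_inner orthonormal_inner_mult[OF orth])
  have "x - R *v l = r - R *v d"
    by (simp add: r_def d_def matrix_vector_mult_diff_distrib)
  then have "(\<Sum>i\<in>{i. \<omega> i}. (r $ i - (R *v d) $ i) * (R *v d) $ i) = 0"
    using is_ols_residual_orthogonal[OF ols, of d] by simp
  moreover have "inner r (R *v d) = 0"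
    unfolding r_def by (rule orthonormal_projection_residual_orthogonal[OF orth])
  moreover have "(\<Sum>i\<in>{i. \<not> \<omega> i}. ((R *v d) $ i)\<^sup>2) \<le> \<delta> * (norm (R *v d))\<^sup>2"
    using sum_matrix_vector_mult_sq_le[of R d "{i. \<not> \<omega> i}"] mult_right_mono[OF leverage, of "(norm d)\<^sup>2"]
    by (simp add: norm_Rd)
  moreover have "0 \<le> \<delta>"
    using leverage sum_nonneg[of "{i. \<not> \<omega> i}" "\<lambda>i. (norm (R $ i))\<^sup>2"] by simp
  ultimately have "(1 - \<delta>)\<^sup>2 * (norm (R *v d))\<^sup>2 \<le> \<delta> * (norm r)\<^sup>2"
    using \<open>\<delta> \<le> 1\<close> by (intro masked_orthogonal_energy_le)
  then show ?thesis
    unfolding norm_Rd by (simp only: r_def d_def)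
qed

lemma le_div_two_mult_add_one_imp:
  fixes \<delta> \<epsilon> :: real
  assumes "0 < \<epsilon>" "\<delta> \<le> \<epsilon> / (2 * \<epsilon> + 1)"
  shows "\<delta> < 1" and "\<delta> \<le> \<epsilon> * (1 - \<delta>)\<^sup>2"
proof -
  have scaled: "\<delta> * (2 * \<epsilon> + 1) \<le> \<epsilon>"
    using assms by (simp add: pos_le_divide_eq)
  show "\<delta> < 1"
  proof (rule ccontr)
    assume "\<not> \<delta> < 1"
    then have "2 * \<epsilon> + 1 \<le> \<delta> * (2 * \<epsilon> + 1)"
      using \<open>0 < \<epsilon>\<close> mult_right_mono[of 1 \<delta> "2 * \<epsilon> + 1"] by simp
    then show False
      using scaled \<open>0 < \<epsilon>\<close> by linarith
  qed
  have "\<epsilon> * (1 - \<delta>)\<^sup>2 = (\<epsilon> - \<delta> * (2 * \<epsilon> + 1)) + \<epsilon> * \<delta>\<^sup>2 + \<delta>"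
    by (simp add: power2_eq_square algebra_simps)
  moreover have "0 \<le> \<epsilon> * \<delta>\<^sup>2"
    using \<open>0 < \<epsilon>\<close> by simp
  ultimately show "\<delta> \<le> \<epsilon> * (1 - \<delta>)\<^sup>2"
    using scaled by linarith
qed

lemma ols_residual_le:
  fixes R :: "real^'k^'p"
  assumes orth: "orthonormal R" and ols: "is_ols x \<omega> R l"
    and leverage: "(\<Sum>i\<in>{i. \<not> \<omega> i}. (norm (R $ i))\<^sup>2) \<le> \<epsilon> / (2 * \<epsilon> + 1)"
    and "0 < \<epsilon>"
  shows "(norm (x - R *v l))\<^sup>2 \<le> (1 + \<epsilon>) * (norm (x - R *v (x v* R)))\<^sup>2"
proof -
  define \<delta> where "\<delta> = (\<Sum>i\<in>{i. \<not> \<omega> i}. (norm (R $ i))\<^sup>2)"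
  define \<rho> where "\<rho> = (norm (x - R *v (x v* R)))\<^sup>2"
  have "\<delta> < 1" and \<delta>_le: "\<delta> \<le> \<epsilon> * (1 - \<delta>)\<^sup>2"
    using le_div_two_mult_add_one_imp[OF \<open>0 < \<epsilon>\<close> leverage] by (simp_all add: \<delta>_def)
  have "(1 - \<delta>)\<^sup>2 * (norm (l - x v* R))\<^sup>2 \<le> \<delta> * \<rho>"
    unfolding \<rho>_def
    by (rule ols_coefficient_error_le[OF orth ols]) (use \<open>\<delta> < 1\<close> in \<open>simp_all add: \<delta>_def\<close>)
  also have "\<dots> \<le> (1 - \<delta>)\<^sup>2 * (\<epsilon> * \<rho>)"
    using mult_right_mono[OF \<delta>_le, of \<rho>] by (simp add: \<rho>_def mult_ac)
  finally have "(norm (l - x v* R))\<^sup>2 \<le> \<epsilon> * \<rho>"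
    using \<open>\<delta> < 1\<close> by simp
  then show ?thesis
    using orthonormal_residual_pythagoras[OF orth, of x l] by (simp add: \<rho>_def algebra_simps)
qed

lemma centered_l2_measurable:
  assumes "centered_l2 P" "f \<in> borel_measurable borel"
  shows "f \<in> borel_measurable P"
proof -
  have "sets P = sets borel"
    using assms(1) by (simp add: centered_l2_def)
  then show ?thesis
    using assms(2) measurable_cong_sets[of P borel borel borel] by simp
qed

lemma centered_l2_integrable_component_mult:
  assumes "centered_l2 P"
  shows "integrable P (\<lambda>x::real^'p. x $ i * x $ j)"
proof (rule Bochner_Integration.integrable_bound)
  show "integrable P (\<lambda>x. (norm x)\<^sup>2)"
    using assms by (simp add: centered_l2_def)
  show "(\<lambda>x::real^'p. x $ i * x $ j) \<in> borel_measurable P"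
    by (intro centered_l2_measurable[OF assms] borel_measurable_continuous_onI continuous_intros)
  have "\<bar>x $ i\<bar> * \<bar>x $ j\<bar> \<le> norm x * norm x" for x :: "real^'p"
    by (intro mult_mono component_le_norm_cart) auto
  then show "AE x in P. norm (x $ i * x $ j) \<le> norm ((norm x)\<^sup>2)"
    by (simp add: abs_mult power2_eq_square)
qed

text \<open>On matrices inner is the Frobenius pairing, so the fully observed risk of R is
  tr((I - R R^T) cov P), a linear function of the second-moment matrix.\<close>

lemma has_bochner_integral_projection_residual:
  fixes R :: "real^'k^'p"
  assumes "centered_l2 P" "orthonormal R"
  shows "has_bochner_integral P (\<lambda>x. (norm (x - R *v (x v* R)))\<^sup>2)
           (inner (mat 1 - R ** transpose R) (cov P))"
proof -
  let ?M = "mat 1 - R ** transpose R"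
  have "has_bochner_integral P (\<lambda>x. x $ i * x $ j) (cov P $ i $ j)" for i j
    using centered_l2_integrable_component_mult[OF assms(1)]
    by (simp add: has_bochner_integral_iff cov_def)
  then have "has_bochner_integral P (\<lambda>x. \<Sum>i\<in>UNIV. \<Sum>j\<in>UNIV. ?M $ i $ j * (x $ i * x $ j))
      (\<Sum>i\<in>UNIV. \<Sum>j\<in>UNIV. ?M $ i $ j * cov P $ i $ j)"
    by (intro has_bochner_integral_sum has_bochner_integral_mult_right)
  then show ?thesis
    by (simp add: projection_residual_quadratic_form[OF assms(2)] inner_vec_def)
qed

lemma integrable_projection_residual:
  fixes R :: "real^'k^'p"
  assumes "centered_l2 P" "orthonormal R"
  shows "integrable P (\<lambda>x. (norm (x - R *v (x v* R)))\<^sup>2)"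
  using has_bochner_integral_projection_residual[OF assms] by (simp add: has_bochner_integral_iff)

lemma integral_projection_residual:
  fixes R :: "real^'k^'p"
  assumes "centered_l2 P" "orthonormal R"
  shows "(\<integral>x. (norm (x - R *v (x v* R)))\<^sup>2 \<partial>P) = inner (mat 1 - R ** transpose R) (cov P)"
  using has_bochner_integral_projection_residual[OF assms] by (simp add: has_bochner_integral_iff)

lemma projection_risk_convex_hull_le:
  fixes R :: "real^'k^'p"
  assumes orth: "orthonormal R" and P: "centered_l2 P" "cov P \<in> convex hull (cov ` S)"
    and S: "\<And>P'. P' \<in> S \<Longrightarrow> centered_l2 P' \<and> (\<integral>x. (norm (x - R *v (x v* R)))\<^sup>2 \<partial>P') \<le> W"
  shows "(\<integral>x. (norm (x - R *v (x v* R)))\<^sup>2 \<partial>P) \<le> W"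
proof -
  let ?H = "{A. inner (mat 1 - R ** transpose R) A \<le> W}"
  have "cov P' \<in> ?H" if "P' \<in> S" for P'
    using S[OF that] integral_projection_residual[OF _ orth, of P'] by simp
  then have "cov ` S \<subseteq> ?H"
    by blast
  then have "convex hull (cov ` S) \<subseteq> ?H"
    by (intro hull_minimal convex_halfspace_le)
  then show ?thesis
    using P integral_projection_residual[OF P(1) orth] by auto
qed

lemma compl_loss_ge_projection_risk:
  fixes R :: "real^'k^'p"
  assumes "centered_l2 P" "orthonormal R"
  shows "ennreal (\<integral>x. (norm (x - R *v (x v* R)))\<^sup>2 \<partial>P) \<le> compl_loss lsel P Q R"
proof -
  have "ennreal (\<integral>x. (norm (x - R *v (x v* R)))\<^sup>2 \<partial>P)
      = (\<integral>\<^sup>+ x. ennreal ((norm (x - R *v (x v* R)))\<^sup>2) \<partial>P)"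
    by (rule nn_integral_eq_integral[symmetric]) (simp_all add: integrable_projection_residual[OF assms])
  also have "\<dots> = (\<integral>\<^sup>+ \<omega>. (\<integral>\<^sup>+ x. ennreal ((norm (x - R *v (x v* R)))\<^sup>2) \<partial>P) \<partial>measure_pmf Q)"
    by (simp add: measure_pmf.emeasure_space_1)
  also have "\<dots> \<le> compl_loss lsel P Q R"
    unfolding compl_loss_def
    by (intro nn_integral_mono ennreal_leI orthonormal_projection_residual_le[OF assms(2)])
  finally show ?thesis .
qed

lemma compl_loss_le_projection_risk:
  fixes R :: "real^'k^'p"
  assumes "centered_l2 P" "orthonormal R" "0 \<le> c"
    and pointwise: "\<And>\<omega> x. \<omega> \<in> set_pmf Q \<Longrightarrow>
      (norm (x - R *v lsel x \<omega> R))\<^sup>2 \<le> c * (norm (x - R *v (x v* R)))\<^sup>2"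
  shows "compl_loss lsel P Q R \<le> ennreal (c * (\<integral>x. (norm (x - R *v (x v* R)))\<^sup>2 \<partial>P))"
proof -
  have "(\<integral>\<^sup>+ x. ennreal ((norm (x - R *v lsel x \<omega> R))\<^sup>2) \<partial>P)
      \<le> ennreal (c * (\<integral>x. (norm (x - R *v (x v* R)))\<^sup>2 \<partial>P))" if "\<omega> \<in> set_pmf Q" for \<omega>
  proof -
    have "(\<integral>\<^sup>+ x. ennreal ((norm (x - R *v lsel x \<omega> R))\<^sup>2) \<partial>P)
        \<le> (\<integral>\<^sup>+ x. ennreal (c * (norm (x - R *v (x v* R)))\<^sup>2) \<partial>P)"
      by (intro nn_integral_mono ennreal_leI pointwise[OF that])
    also have "\<dots> = ennreal (\<integral>x. c * (norm (x - R *v (x v* R)))\<^sup>2 \<partial>P)"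
      using integrable_projection_residual[OF assms(1,2)] \<open>0 \<le> c\<close>
      by (intro nn_integral_eq_integral) auto
    finally show ?thesis
      by simp
  qed
  then have "compl_loss lsel P Q R
      \<le> (\<integral>\<^sup>+ \<omega>. ennreal (c * (\<integral>x. (norm (x - R *v (x v* R)))\<^sup>2 \<partial>P)) \<partial>measure_pmf Q)"
    unfolding compl_loss_def by (intro nn_integral_mono_AE) (simp add: AE_measure_pmf_iff)
  then show ?thesis
    by (simp add: measure_pmf.emeasure_space_1)
qed

lemma source_in_Pset:
  assumes "e \<in> {1..E}" "centered_l2 (Pe e)"
  shows "Pe e \<in> Pset E Pe"
  using assms by (auto simp: Pset_def intro: hull_inc)

lemma source_risk_le_worst_risk:
  assumes "e \<in> {1..E}"
  shows "(\<integral>x. (norm (x - R *v (x v* R)))\<^sup>2 \<partial>Pe e) \<le> worst_risk E Pe R"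
  unfolding worst_risk_def using assms by (intro Max_ge) auto

lemma worst_risk_attained:
  assumes "E \<ge> 1"
  obtains e where "e \<in> {1..E}" "worst_risk E Pe R = (\<integral>x. (norm (x - R *v (x v* R)))\<^sup>2 \<partial>Pe e)"
proof -
  have "worst_risk E Pe R \<in> (\<lambda>e. \<integral>x. (norm (x - R *v (x v* R)))\<^sup>2 \<partial>Pe e) ` {1..E}"
    unfolding worst_risk_def using assms by (intro Max_in) auto
  then show ?thesis
    using that by blast
qed

lemma Pset_projection_risk_le_worst_risk:
  fixes R :: "real^'k^'p"
  assumes "orthonormal R" "\<And>e. e \<in> {1..E} \<Longrightarrow> centered_l2 (Pe e)" "P \<in> Pset E Pe"
  shows "(\<integral>x. (norm (x - R *v (x v* R)))\<^sup>2 \<partial>P) \<le> worst_risk E Pe R"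
proof (rule projection_risk_convex_hull_le[OF assms(1)])
  show "centered_l2 P" "cov P \<in> convex hull (cov ` Pe ` {1..E})"
    using assms(3) by (simp_all add: Pset_def image_image)
qed (use assms(2) source_risk_le_worst_risk in blast)

lemma worst_risk_le_SUP_compl_loss:
  fixes R :: "real^'k^'p"
  assumes "E \<ge> 1" "\<And>e. e \<in> {1..E} \<Longrightarrow> centered_l2 (Pe e)" "orthonormal R"
  shows "ennreal (worst_risk E Pe R) \<le> (SUP P\<in>Pset E Pe. compl_loss lsel P Q R)"
proof -
  obtain e where e: "e \<in> {1..E}"
    and risk: "worst_risk E Pe R = (\<integral>x. (norm (x - R *v (x v* R)))\<^sup>2 \<partial>Pe e)"
    using worst_risk_attained[OF assms(1)] .
  have "ennreal (worst_risk E Pe R) \<le> compl_loss lsel (Pe e) Q R"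
    unfolding risk by (rule compl_loss_ge_projection_risk[OF assms(2)[OF e] assms(3)])
  also have "\<dots> \<le> (SUP P\<in>Pset E Pe. compl_loss lsel P Q R)"
    by (rule SUP_upper[OF source_in_Pset[where Pe = Pe, OF e assms(2)[OF e]]])
  finally show ?thesis .
qed

lemma incoherent_sum_row_norm_sq_le:
  fixes R :: "real^'k^'p"
  assumes "incoherent \<mu> R"
  shows "(\<Sum>i\<in>M. (norm (R $ i))\<^sup>2) \<le> real (card M) * \<mu>\<^sup>2 * real CARD('k) / real CARD('p)"
proof -
  have "(norm (R $ i))\<^sup>2 \<le> (\<mu> * sqrt (real CARD('k) / real CARD('p)))\<^sup>2" for i
    using assms by (intro power_mono) (auto simp: incoherent_def)
  then have "(norm (R $ i))\<^sup>2 \<le> \<mu>\<^sup>2 * real CARD('k) / real CARD('p)" for i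
    by (simp add: power_mult_distrib)
  then have "(\<Sum>i\<in>M. (norm (R $ i))\<^sup>2) \<le> real (card M) * (\<mu>\<^sup>2 * real CARD('k) / real CARD('p))"
    by (rule sum_bounded_above)
  then show ?thesis
    by simp
qed

lemma incoherent_missing_leverage_le:
  fixes R :: "real^'k^'p"
  assumes "incoherent \<mu> R" "\<mu> \<noteq> 0" "0 < \<epsilon>"
    and "real (card M) \<le> real CARD('p) * \<epsilon> / (real CARD('k) * \<mu>\<^sup>2 * (2 * \<epsilon> + 1))"
  shows "(\<Sum>i\<in>M. (norm (R $ i))\<^sup>2) \<le> \<epsilon> / (2 * \<epsilon> + 1)"
proof -
  have "(\<Sum>i\<in>M. (norm (R $ i))\<^sup>2) \<le> real (card M) * \<mu>\<^sup>2 * real CARD('k) / real CARD('p)"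
    by (rule incoherent_sum_row_norm_sq_le[OF assms(1)])
  also have "\<dots> \<le> real CARD('p) * \<epsilon> / (real CARD('k) * \<mu>\<^sup>2 * (2 * \<epsilon> + 1))
      * \<mu>\<^sup>2 * real CARD('k) / real CARD('p)"
    using assms(4) by (intro divide_right_mono mult_right_mono) auto
  also have "\<dots> = \<epsilon> / (2 * \<epsilon> + 1)"
  proof -
    have "real CARD('p) * \<epsilon> / (real CARD('k) * \<mu>\<^sup>2 * c) * \<mu>\<^sup>2 * real CARD('k) / real CARD('p)
        = \<epsilon> / c" if "c \<noteq> 0" for c
      using that assms(2) by (simp add: field_simps)
    then show ?thesis
      using assms(3) by simp
  qed
  finally show ?thesis .
qed

lemma compl_loss_le_worst_risk:
  fixes R :: "real^'k^'p"
  assumes orth: "orthonormal R" and sources: "\<And>e. e \<in> {1..E} \<Longrightarrow> centered_l2 (Pe e)"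
    and P: "P \<in> Pset E Pe" and "0 < \<epsilon>"
    and ols: "\<And>x \<omega>. is_ols x \<omega> R (lsel x \<omega> R)"
    and leverage: "\<And>\<omega>. \<omega> \<in> set_pmf Q \<Longrightarrow>
      (\<Sum>i\<in>{i. \<not> \<omega> i}. (norm (R $ i))\<^sup>2) \<le> \<epsilon> / (2 * \<epsilon> + 1)"
  shows "compl_loss lsel P Q R \<le> ennreal (1 + \<epsilon>) * ennreal (worst_risk E Pe R)"
proof -
  have "centered_l2 P"
    using P by (simp add: Pset_def)
  have "compl_loss lsel P Q R \<le> ennreal ((1 + \<epsilon>) * (\<integral>x. (norm (x - R *v (x v* R)))\<^sup>2 \<partial>P))"
    using \<open>0 < \<epsilon>\<close> ols_residual_le[OF orth ols leverage]
    by (intro compl_loss_le_projection_risk[OF \<open>centered_l2 P\<close> orth]) auto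
  also have "\<dots> \<le> ennreal ((1 + \<epsilon>) * worst_risk E Pe R)"
    using Pset_projection_risk_le_worst_risk[OF orth sources P] \<open>0 < \<epsilon>\<close>
    by (intro ennreal_leI mult_left_mono) auto
  finally show ?thesis
    using \<open>0 < \<epsilon>\<close> by (simp add: ennreal_mult')
qed

theorem mainTheorem8:
  fixes E :: nat
    and Pe :: "nat \<Rightarrow> (real^'p) measure"
    and \<epsilon> \<mu> :: real
    and Rstar :: "real^'k^'p"
    and Q :: "('p \<Rightarrow> bool) pmf"
    and lsel :: "real^'p \<Rightarrow> ('p \<Rightarrow> bool) \<Rightarrow> real^'k^'p \<Rightarrow> real^'k"
  assumes E_pos: "E \<ge> 1"
    and Pe_ok: "\<And>e. e \<in> {1..E} \<Longrightarrow> centered_l2 (Pe e)"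
    and Pe_tr: "\<And>e. e \<in> {1..E} \<Longrightarrow> mtrace (cov (Pe e)) > 0"
    and eps: "0 < \<epsilon>" "\<epsilon> < 1"
    and mu: "\<mu> \<ge> 1"
    and Rstar_orth: "orthonormal Rstar"
    and Rstar_min: "\<And>R :: real^'k^'p. orthonormal R \<Longrightarrow> worst_risk E Pe Rstar \<le> worst_risk E Pe R"
    and Q_missing: "\<And>\<omega>. \<omega> \<in> set_pmf Q \<Longrightarrow>
        real (card {i. \<not> \<omega> i})
          \<le> real CARD('p) * \<epsilon> / (real CARD('k) * \<mu>\<^sup>2 * (2 * \<epsilon> + 1))"
    and lsel_ols: "\<And>x \<omega> R. orthonormal R \<Longrightarrow> is_ols x \<omega> R (lsel x \<omega> R)"
    and lsel_meas: "\<And>\<omega> R. orthonormal R \<Longrightarrow> (\<lambda>x. lsel x \<omega> R) \<in> borel_measurable borel"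
    and incoh: "incoherent \<mu> Rstar"
  shows "\<forall>R. orthonormal R \<longrightarrow>
           (SUP P\<in>Pset E Pe. compl_loss lsel P Q Rstar)
             \<le> ennreal (1 + \<epsilon>) * (SUP P\<in>Pset E Pe. compl_loss lsel P Q R)"
proof (intro allI impI)
  fix R :: "real^'k^'p"
  assume "orthonormal R"
  have "\<mu> \<noteq> 0"
    using mu by simp
  have "compl_loss lsel P Q Rstar \<le> ennreal (1 + \<epsilon>) * ennreal (worst_risk E Pe Rstar)"
    if "P \<in> Pset E Pe" for P
    using Rstar_orth Pe_ok that eps(1) lsel_ols[OF Rstar_orth]
      incoherent_missing_leverage_le[OF incoh \<open>\<mu> \<noteq> 0\<close> eps(1) Q_missing]
    by (rule compl_loss_le_worst_risk)
  then have "(SUP P\<in>Pset E Pe. compl_loss lsel P Q Rstar)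
      \<le> ennreal (1 + \<epsilon>) * ennreal (worst_risk E Pe Rstar)"
    by (rule SUP_least)
  also have "\<dots> \<le> ennreal (1 + \<epsilon>) * ennreal (worst_risk E Pe R)"
    by (intro mult_left_mono ennreal_leI Rstar_min \<open>orthonormal R\<close>) simp
  also have "\<dots> \<le> ennreal (1 + \<epsilon>) * (SUP P\<in>Pset E Pe. compl_loss lsel P Q R)"
    by (intro mult_left_mono worst_risk_le_SUP_compl_loss E_pos Pe_ok \<open>orthonormal R\<close>) simp_all
  finally show "(SUP P\<in>Pset E Pe. compl_loss lsel P Q Rstar)
      \<le> ennreal (1 + \<epsilon>) * (SUP P\<in>Pset E Pe. compl_loss lsel P Q R)" .
qed

end
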